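(* Let $n\geq1$ and $1\leq i<j\leq n$. In $M_n$, the right-lcm of $\rho_i$ and $\rho_j$ exists and equals $\rho_i\rho_n^{\,i}\rho_{j-i}=\rho_j\rho_n^{\,i}$.
   Context: $M_n$ denotes the monoid with generators $\rho_1,\dots,\rho_n$ and relations $\rho_1\rho_n\rho_i=\rho_{i+1}\rho_n$ for $1\leq i\leq n-1$. A right-lcm of $a,b$ is a common right-multiple of $a$ and $b$ (an element $ax=by$) that left-divides every common right-multiple of $a$ and $b$. *)

theory Defs
  imports Main
begin

text \<open>The monoid M_n is presented by generators rho_1..rho_n (encoded as the naturals 1..n)
  and relations rho_1 rho_n rho_i = rho_{i+1} rho_n for 1 <= i <= n-1.
  Elements are represented by words (lists over {1..n}) modulo the congruence
  generated by the relations.\<close>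

definition rels :: "nat \<Rightarrow> (nat list \<times> nat list) set" where
  "rels n = {([1, n, i], [i + 1, n]) | i. 1 \<le> i \<and> i \<le> n - 1}"

definition words :: "nat \<Rightarrow> nat list set" where
  "words n = lists {1..n}"

definition rstep :: "nat \<Rightarrow> nat list \<Rightarrow> nat list \<Rightarrow> bool" where
  "rstep n x y \<longleftrightarrow> (\<exists>u v l r. ((l, r) \<in> rels n \<or> (r, l) \<in> rels n)
      \<and> x = u @ l @ v \<and> y = u @ r @ v)"

definition meq :: "nat \<Rightarrow> nat list \<Rightarrow> nat list \<Rightarrow> bool" where
  "meq n = (rstep n)\<^sup>*\<^sup>*"

definition ldiv :: "nat \<Rightarrow> nat list \<Rightarrow> nat list \<Rightarrow> bool" where
  "ldiv n a b \<longleftrightarrow> (\<exists>x \<in> words n. meq n (a @ x) b)"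

definition is_right_lcm :: "nat \<Rightarrow> nat list \<Rightarrow> nat list \<Rightarrow> nat list \<Rightarrow> bool" where
  "is_right_lcm n a b c \<longleftrightarrow> c \<in> words n \<and> ldiv n a c \<and> ldiv n b c \<and>
     (\<forall>d \<in> words n. ldiv n a d \<and> ldiv n b d \<longrightarrow> ldiv n c d)"

end

theory Submission
  imports Defs
begin

text \<open>Every relation is homogeneous for the weight of a word (the sum of its letters), since
  1 + n + i = (i + 1) + n. The key fact is a left-cancellation property: if
  rho_a u = rho_b v with a < b \<le> n, then u = rho_n^a rho_(b-a) w and v = rho_n^a w for some w,
  and if a = b then u = v. It is proved by induction on the weight, following the rewriting
  chain from rho_a u to rho_b v and analysing the steps that involve the first letter; there
  the identity rho_i rho_n^i rho_(j-i) = rho_j rho_n^i reassembles the factorisations.\<close>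

lemma rstep_sym: "rstep n x y \<Longrightarrow> rstep n y x"
  unfolding rstep_def by blast

lemma meq_refl [simp]: "meq n x x"
  by (simp add: meq_def)

lemma meq_trans [trans]: "meq n x y \<Longrightarrow> meq n y z \<Longrightarrow> meq n x z"
  unfolding meq_def by simp

lemma meq_sym: "meq n x y \<Longrightarrow> meq n y x"
  unfolding meq_def
  by (induction rule: rtranclp_induct)
     (auto intro: converse_rtranclp_into_rtranclp rstep_sym)

lemma rstep_append: "rstep n x y \<Longrightarrow> rstep n (p @ x @ q) (p @ y @ q)"
  unfolding rstep_def by (metis append.assoc)

lemma meq_append: "meq n x y \<Longrightarrow> meq n (p @ x @ q) (p @ y @ q)"
  unfolding meq_def
  by (induction rule: rtranclp_induct) (auto intro: rstep_append rtranclp.rtrancl_into_rtrancl)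

lemma meq_Cons: "meq n x y \<Longrightarrow> meq n (a # x) (a # y)"
  using meq_append[of n x y "[a]" "[]"] by simp

lemma meq_append_left: "meq n x y \<Longrightarrow> meq n (p @ x) (p @ y)"
  using meq_append[of n x y p "[]"] by simp

lemma meq_append_right: "meq n x y \<Longrightarrow> meq n (x @ q) (y @ q)"
  using meq_append[of n x y "[]" q] by simp

lemma meq_rel: "1 \<le> i \<Longrightarrow> i \<le> n - 1 \<Longrightarrow> meq n [1, n, i] [i + 1, n]"
  unfolding meq_def rstep_def rels_def
  by (intro r_into_rtranclp exI[of _ "[]"] exI[of _ "[1, n, i]"] exI[of _ "[i + 1, n]"]) auto

lemma meq_sum_list: "meq n x y \<Longrightarrow> sum_list x = sum_list y"
  unfolding meq_def
  by (induction rule: rtranclp_induct) (auto simp: rstep_def rels_def)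

lemma meq_words: "meq n x y \<Longrightarrow> x \<in> words n \<Longrightarrow> y \<in> words n"
  unfolding meq_def rstep_def rels_def words_def
  by (induction rule: rtranclp_induct) auto

lemma meq_lcm_identity:
  "1 \<le> i \<Longrightarrow> i < j \<Longrightarrow> j \<le> n \<Longrightarrow>
   meq n ([i] @ replicate i n @ [j - i]) ([j] @ replicate i n)"
proof (induction i arbitrary: j)
  case 0
  then show ?case by simp
next
  case (Suc i)
  show ?case
  proof (cases "i = 0")
    case True
    with Suc.prems meq_rel[of "j - 1" n] show ?thesis by simp
  next
    case False
    have "[Suc i] @ replicate (Suc i) n @ [j - Suc i] = [Suc i, n] @ replicate i n @ [j - Suc i]"
      by (simp add: replicate_app_Cons_same)
    also have "meq n \<dots> ([1, n] @ ([i] @ replicate i n @ [(j - 1) - i]))"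
      using meq_append_right[OF meq_sym[OF meq_rel[of i n]]] Suc.prems False by simp
    also have "meq n \<dots> ([1, n] @ ([j - 1] @ replicate i n))"
      using Suc.IH[of "j - 1"] Suc.prems False by (intro meq_append_left) simp
    also have "meq n \<dots> ([j] @ replicate (Suc i) n)"
      using meq_append_right[OF meq_rel[of "j - 1" n]] Suc.prems
      by (simp add: replicate_app_Cons_same)
    finally show ?thesis .
  qed
qed

lemma rstep_Cons_cases:
  assumes "rstep n (a # u) y"
  obtains (tail) u' where "y = a # u'" "rstep n u u'"
    | (lhs) i t where "1 \<le> i" "i \<le> n - 1" "a = 1" "u = n # i # t" "y = (i + 1) # n # t"
    | (rhs) i t where "1 \<le> i" "i \<le> n - 1" "a = i + 1" "u = n # t" "y = 1 # n # i # t"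
proof -
  obtain u0 v l r where lr: "(l, r) \<in> rels n \<or> (r, l) \<in> rels n"
    and x: "a # u = u0 @ l @ v" and y: "y = u0 @ r @ v"
    using assms unfolding rstep_def by blast
  show thesis
  proof (cases u0)
    case Nil
    with lr x y that(2,3) show ?thesis unfolding rels_def by auto
  next
    case (Cons c u1)
    with lr x have "rstep n u (u1 @ r @ v)" unfolding rstep_def by auto
    with Cons x y that(1) show ?thesis by auto
  qed
qed

text \<open>The shape forced on u and v by rho_a u = rho_b v: for a < b both sides are right
  multiples of rho_a rho_n^a rho_(b-a) = rho_b rho_n^a, and symmetrically for b < a.\<close>
definition lcm_split :: "nat \<Rightarrow> nat \<Rightarrow> nat list \<Rightarrow> nat \<Rightarrow> nat list \<Rightarrow> bool" where
  "lcm_split n a u b v \<longleftrightarrow> (a = b \<longrightarrow> meq n u v)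
    \<and> (a < b \<longrightarrow> (\<exists>w. meq n u (replicate a n @ [b - a] @ w) \<and> meq n v (replicate a n @ w)))
    \<and> (b < a \<longrightarrow> (\<exists>w. meq n v (replicate b n @ [a - b] @ w) \<and> meq n u (replicate b n @ w)))"

lemma lcm_split_eq: "a = b \<Longrightarrow> meq n u v \<Longrightarrow> lcm_split n a u b v"
  unfolding lcm_split_def by auto

lemma lcm_split_less:
  "a < b \<Longrightarrow> meq n u (replicate a n @ [b - a] @ w) \<Longrightarrow> meq n v (replicate a n @ w) \<Longrightarrow>
   lcm_split n a u b v"
  unfolding lcm_split_def by auto

lemma lcm_split_greater:
  "b < a \<Longrightarrow> meq n v (replicate b n @ [a - b] @ w) \<Longrightarrow> meq n u (replicate b n @ w) \<Longrightarrow>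
   lcm_split n a u b v"
  unfolding lcm_split_def by auto

lemma lcm_split_meq:
  "meq n u u' \<Longrightarrow> meq n v v' \<Longrightarrow> lcm_split n a u' b v' \<Longrightarrow> lcm_split n a u b v"
  unfolding lcm_split_def by (meson meq_sym meq_trans)

lemma lcm_split_Suc: "lcm_split n a u b v \<Longrightarrow> lcm_split n (Suc a) (n # u) (Suc b) (n # v)"
  unfolding lcm_split_def by (auto intro: meq_Cons)

lemma lcm_split_rel_lhs:
  assumes i: "1 \<le> i" "i \<le> n - 1" and b: "1 \<le> b" "b \<le> n"
    and cancel: "\<And>w. meq n (n # t) (n # w) \<Longrightarrow> meq n t w"
    and split: "lcm_split n (i + 1) (n # t) b v"
  shows "lcm_split n 1 (n # i # t) b v"
proof -
  consider "b = i + 1" | "b = 1" | "1 < b" "b < i + 1" | "i + 1 < b"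
    using b by linarith
  then show ?thesis
  proof cases
    case 1
    with split have "meq n (n # t) v" by (simp add: lcm_split_def)
    with 1 i show ?thesis by (intro lcm_split_less[where w = t]) (simp_all add: meq_sym)
  next
    case 2
    with split i obtain w where v: "meq n v (n # i # w)" and "meq n (n # t) (n # w)"
      by (auto simp: lcm_split_def)
    then have "meq n (n # i # t) (n # i # w)"
      using cancel meq_append_left[of n t w "[n, i]"] by simp
    with v 2 show ?thesis by (blast intro: lcm_split_eq meq_sym meq_trans)
  next
    case 3
    then obtain b' where b': "b = Suc b'" "1 \<le> b'" by (cases b) auto
    from split 3 obtain w where v: "meq n v (replicate b n @ [i + 1 - b] @ w)"
      and "meq n (n # t) (n # (replicate b' n @ w))"
      by (auto simp: lcm_split_def b')
    then have "meq n (n # i # t) ([n, i] @ replicate b' n @ w)"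
      using cancel meq_append_left[of n t _ "[n, i]"] by simp
    also have "meq n \<dots> ([n, b'] @ replicate b' n @ [i - b'] @ w)"
      using meq_append[OF meq_sym[OF meq_lcm_identity[of b' i n]], of "[n]" w] b' 3 i by simp
    finally show ?thesis
      using v b' 3 by (intro lcm_split_less[where w = "replicate b' n @ [i - b'] @ w"]) simp_all
  next
    case 4
    from split 4 obtain w where "meq n (n # t) (n # (replicate i n @ [b - (i + 1)] @ w))"
      and v: "meq n v (replicate (i + 1) n @ w)"
      by (auto simp: lcm_split_def)
    then have "meq n (n # i # t) ([n, i] @ replicate i n @ [(b - 1) - i] @ w)"
      using cancel meq_append_left[of n t _ "[n, i]"] by (simp add: diff_diff_add)
    also have "meq n \<dots> ([n, b - 1] @ replicate i n @ w)"
      using meq_append[OF meq_lcm_identity[of i "b - 1" n], of "[n]" w] 4 b i by simp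
    finally show ?thesis
      using v 4 by (intro lcm_split_less[where w = "replicate i n @ w"]) simp_all
  qed
qed

lemma lcm_split_rel_rhs:
  assumes i: "1 \<le> i" "i \<le> n - 1" and b: "1 \<le> b" "b \<le> n"
    and cancel: "\<And>w. meq n (n # i # t) (n # w) \<Longrightarrow> meq n (i # t) w"
    and split_tail: "\<And>c w. 1 \<le> c \<Longrightarrow> c \<le> n \<Longrightarrow> meq n (i # t) (c # w) \<Longrightarrow> lcm_split n i t c w"
    and split: "lcm_split n 1 (n # i # t) b v"
  shows "lcm_split n (i + 1) (n # t) b v"
proof (cases "b = 1")
  case True
  with split have "meq n (n # i # t) v" by (simp add: lcm_split_def)
  with True i show ?thesis by (intro lcm_split_greater[where w = t]) (simp_all add: meq_sym)
next
  case False
  with b split obtain w where "meq n (n # i # t) (n # (b - 1) # w)" and v: "meq n v (n # w)"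
    by (auto simp: lcm_split_def)
  with cancel have "meq n (i # t) ((b - 1) # w)" by blast
  with split_tail b False have "lcm_split n i t (b - 1) w" by simp
  then have "lcm_split n (i + 1) (n # t) b (n # w)"
    using lcm_split_Suc False b by fastforce
  with v show ?thesis by (rule lcm_split_meq[OF meq_refl])
qed

lemma lcm_split_rstep_Cons:
  assumes n: "1 \<le> n" and b: "1 \<le> b" "b \<le> n" and step: "rstep n (a # u) y"
    and y_split: "\<And>a' u'. y = a' # u' \<Longrightarrow> lcm_split n a' u' b v"
    and split_lighter: "\<And>a' u' c w. sum_list (a' # u') < sum_list (a # u) \<Longrightarrow> 1 \<le> c \<Longrightarrow>
      c \<le> n \<Longrightarrow> meq n (a' # u') (c # w) \<Longrightarrow> lcm_split n a' u' c w"
  shows "lcm_split n a u b v"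
proof -
  have cancel: "meq n s w" if "sum_list (n # s) < sum_list (a # u)" "meq n (n # s) (n # w)" for s w
    using split_lighter[OF that(1) n order_refl that(2)] by (simp add: lcm_split_def)
  from step show ?thesis
  proof (cases rule: rstep_Cons_cases)
    case (tail u')
    with y_split show ?thesis
      by (metis lcm_split_meq meq_def meq_refl r_into_rtranclp)
  next
    case (lhs i t)
    have "meq n t w" if "meq n (n # t) (n # w)" for w
      using cancel[OF _ that] lhs by simp
    from lcm_split_rel_lhs[OF lhs(1,2) b this y_split[OF lhs(5)]]
    show ?thesis unfolding lhs(3,4) .
  next
    case (rhs i t)
    have "meq n (i # t) w" if "meq n (n # i # t) (n # w)" for w
      using cancel[OF _ that] rhs by simp
    moreover have "lcm_split n i t c w"
      if "1 \<le> c" "c \<le> n" "meq n (i # t) (c # w)" for c w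
      using split_lighter[OF _ that] rhs by simp
    ultimately show ?thesis
      using lcm_split_rel_rhs[OF rhs(1,2) b _ _ y_split[OF rhs(5)]]
      unfolding rhs(3,4) by blast
  qed
qed

lemma meq_Cons_lcm_split:
  assumes n: "1 \<le> n" and b: "1 \<le> b" "b \<le> n" and eq: "meq n (a # u) (b # v)"
  shows "lcm_split n a u b v"
proof -
  have "lcm_split n a u b v"
    if "sum_list (a # u) = N" "1 \<le> b" "b \<le> n" "meq n (a # u) (b # v)" for N a u b v
    using that
  proof (induction N arbitrary: a u b v rule: less_induct)
    case (less N)
    have "\<forall>a u. x = a # u \<longrightarrow> sum_list x = N \<longrightarrow> lcm_split n a u b v"
      if "(rstep n)\<^sup>*\<^sup>* x (b # v)" for x
      using that
    proof (induction x rule: converse_rtranclp_induct)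
      case base
      then show ?case by (auto intro: lcm_split_eq)
    next
      case (step x y)
      have "sum_list y = sum_list x"
        using meq_sum_list[of n x y] step.hyps(1) unfolding meq_def by (metis r_into_rtranclp)
      show ?case
      proof (intro allI impI)
        fix a u assume x: "x = a # u" and N: "sum_list x = N"
        show "lcm_split n a u b v"
        proof (rule lcm_split_rstep_Cons[OF n less.prems(2,3)])
          show "rstep n (a # u) y" using step.hyps(1) x by simp
          show "lcm_split n a' u' b v" if "y = a' # u'" for a' u'
            using step.IH that N \<open>sum_list y = sum_list x\<close> by auto
          show "lcm_split n a' u' c w"
            if "sum_list (a' # u') < sum_list (a # u)" "1 \<le> c" "c \<le> n" "meq n (a' # u') (c # w)"
            for a' u' c w
            using less.IH[OF _ refl that(2-4)] that(1) N x by simp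
        qed
      qed
    qed
    then show ?case using less.prems unfolding meq_def by blast
  qed
  with b eq show ?thesis by blast
qed

lemma ldiv_common_multiple:
  assumes "1 \<le> n" "1 \<le> i" "i < j" "j \<le> n"
    and "ldiv n [i] d" "ldiv n [j] d"
  shows "ldiv n ([i] @ replicate i n @ [j - i]) d"
proof -
  obtain x where x: "x \<in> words n" "meq n ([i] @ x) d"
    using assms(5) unfolding ldiv_def by blast
  obtain y where "meq n ([j] @ y) d"
    using assms(6) unfolding ldiv_def by blast
  with x have "meq n (i # x) (j # y)" by (auto intro: meq_trans meq_sym)
  with assms have "lcm_split n i x j y" by (intro meq_Cons_lcm_split) auto
  with assms obtain w where w: "meq n x (replicate i n @ [j - i] @ w)"
    unfolding lcm_split_def by auto
  from meq_words[OF w x(1)] have "w \<in> words n" by (simp add: words_def)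
  moreover have "meq n (([i] @ replicate i n @ [j - i]) @ w) d"
    using meq_trans[OF meq_Cons[OF meq_sym[OF w], of i]] x(2) by simp
  ultimately show ?thesis unfolding ldiv_def by blast
qed

theorem corollary4p10:
  fixes n i j :: nat
  assumes "1 \<le> n" and "1 \<le> i" and "i < j" and "j \<le> n"
  shows "is_right_lcm n [i] [j] ([i] @ replicate i n @ [j - i])
         \<and> meq n ([i] @ replicate i n @ [j - i]) ([j] @ replicate i n)"
proof -
  let ?c = "[i] @ replicate i n @ [j - i]"
  have identity: "meq n ?c ([j] @ replicate i n)"
    using meq_lcm_identity assms by simp
  have "?c \<in> words n"
    using assms unfolding words_def by auto
  moreover have "ldiv n [i] ?c"
    using assms unfolding ldiv_def words_def by (intro bexI[of _ "replicate i n @ [j - i]"]) auto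
  moreover have "ldiv n [j] ?c"
    using assms meq_sym[OF identity] unfolding ldiv_def words_def
    by (intro bexI[of _ "replicate i n"]) auto
  ultimately have "is_right_lcm n [i] [j] ?c"
    using ldiv_common_multiple[OF assms] unfolding is_right_lcm_def by blast
  with identity show ?thesis by blast
qed

end
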